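(* Let $k$ be a field, $V$ a $k$-vector space, and $\varphi\in\operatorname{End}_k(V)$ a finite potent endomorphism with index $i(\varphi)=r$ and AST-decomposition $V=W_\varphi\oplus U_\varphi$. Fix a Jordan basis of $U_\varphi$ induced by $\varphi|_{U_\varphi}$, given by pairwise disjoint index sets $S_1,\dots,S_r$, $\overline S=S_1\cup\dots\cup S_r$, and vectors $v_{s}\in U_\varphi$ ($s\in\overline S$) such that, writing $s_h$ for an element of $S_h$, one has $\varphi^{h}(v_{s_h})=0$ and $\bigcup_{h=1}^r\bigcup_{s_h\in S_h}\{v_{s_h},\varphi(v_{s_h}),\dots,\varphi^{h-1}(v_{s_h})\}$ is a basis of $U_\varphi$. Then the generalized inverses $g\in\operatorname{End}_k(U_\varphi)$ of $\varphi|_{U_\varphi}$ are exactly the linear maps determined, for each $1\le h\le r$ and $s_h\in S_h$, by $$g(\varphi^i(v_{s_h}))=\begin{cases}\varphi^{i-1}(v_{s_h})+\sum_{s_t\in\overline S}\lambda^{i}_{s_h,s_t}\,\varphi^{t-1}(v_{s_t}) & \text{if } 1\le i\le h-1,\\ v_{s_h}' & \text{if } i=0,\end{cases}$$ where $v'_{s_h}\in U_\varphi$ are arbitrary vectors and $\lambda^{i}_{s_h,s_t}\in k$ are arbitrary scalars such that, for each $s_h$ and $i$, $\lambda^{i}_{s_h,s_t}=0$ for all but finitely many $s_t\in\overline S$ (here $t$ denotes the index with $s_t\in S_t$).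
   Context: An endomorphism $\varphi$ of a $k$-vector space $V$ is finite potent if $\varphi^n(V)$ is finite dimensional for some $n$. For such $\varphi$, the AST-decomposition is $V=U_\varphi\oplus W_\varphi$ where $U_\varphi=\{v\in V: \varphi^m(v)=0 \text{ for some } m\}$ and $W_\varphi=\{v\in V: p(\varphi)(v)=0 \text{ for some } p(x)\in k[x] \text{ coprime to } x\}$; both are $\varphi$-invariant, $\varphi|_{U_\varphi}$ is nilpotent, $W_\varphi$ is finite dimensional and $\varphi|_{W_\varphi}$ is an automorphism. The index $i(\varphi)$ is the nilpotency order of $\varphi|_{U_\varphi}$. A generalized inverse of an endomorphism $g_0$ of $U$ is an endomorphism $g$ of $U$ with $g_0\circ g\circ g_0=g_0$. *)

theory Defs
  imports Complex_Main
begin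

definition finite_potent :: "('a::field \<Rightarrow> 'v::ab_group_add \<Rightarrow> 'v) \<Rightarrow> ('v \<Rightarrow> 'v) \<Rightarrow> bool" where
  "finite_potent scale \<phi> \<longleftrightarrow> Vector_Spaces.linear scale scale \<phi> \<and>
     (\<exists>n B. finite B \<and> Modules.module.span scale B = range (\<phi> ^^ n))"

definition U_part :: "('v::zero \<Rightarrow> 'v) \<Rightarrow> 'v set" where
  "U_part \<phi> = {v. \<exists>m. (\<phi> ^^ m) v = 0}"

definition fp_index :: "('v::zero \<Rightarrow> 'v) \<Rightarrow> nat" where
  "fp_index \<phi> = (LEAST r. \<forall>v\<in>U_part \<phi>. (\<phi> ^^ r) v = 0)"

text \<open>g is an endomorphism of the subspace U (values of g outside U are irrelevant).\<close>
definition endo_on :: "('a::field \<Rightarrow> 'v::ab_group_add \<Rightarrow> 'v) \<Rightarrow> 'v set \<Rightarrow> ('v \<Rightarrow> 'v) \<Rightarrow> bool" where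
  "endo_on scale U g \<longleftrightarrow> g ` U \<subseteq> U \<and>
     (\<forall>x\<in>U. \<forall>y\<in>U. g (x + y) = g x + g y) \<and>
     (\<forall>c. \<forall>x\<in>U. g (scale c x) = scale c (g x))"

definition gen_inverse_on :: "'v set \<Rightarrow> ('v \<Rightarrow> 'v) \<Rightarrow> ('v \<Rightarrow> 'v) \<Rightarrow> bool" where
  "gen_inverse_on U g0 g \<longleftrightarrow> (\<forall>u\<in>U. g0 (g (g0 u)) = g0 u)"

end

theory Submission imports Defs begin

(* On the Jordan basis B of U = U_part phi, phi shifts every chain phi^j(v_s) to its next
   vector and kills the chain tops phi^(h-1)(v_s); it is injective with independent image
   on the remaining basis vectors, so the kernel of phi on U is spanned by the tops. By
   linearity, g is a generalized inverse iff phi(g(phi b)) = phi b for all b in B, i.e. iff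
   g(phi^i(v_s)) - phi^(i-1)(v_s) lies in that kernel for 1 <= i <= h-1: it is a finite
   combination of tops, while the values g(v_s) do not enter the condition at all.
   Conversely, arbitrary values in U prescribed on B extend to an endomorphism of U. *)

lemma U_part_invariant:
  assumes "\<phi> 0 = 0" and "u \<in> U_part \<phi>"
  shows "\<phi> u \<in> U_part \<phi>"
proof -
  obtain m where "(\<phi> ^^ m) u = 0" using assms(2) unfolding U_part_def by blast
  then have "(\<phi> ^^ m) (\<phi> u) = 0" by (metis assms(1) funpow_swap1)
  then show ?thesis unfolding U_part_def by blast
qed

lemma endo_on_zero:
  assumes "endo_on scale U g" and "0 \<in> U"
  shows "g 0 = 0"
proof -
  have "g (0 + 0) = g 0 + g 0" using assms unfolding endo_on_def by blast
  then show ?thesis by simp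
qed

context vector_space
begin

lemma endo_on_span_if_linear:
  assumes "Vector_Spaces.linear scale scale g" and "g ` span B \<subseteq> span B"
  shows "endo_on scale (span B) g"
proof -
  interpret g: Vector_Spaces.linear scale scale g by (rule assms(1))
  show ?thesis using assms(2) unfolding endo_on_def by (simp add: g.add g.scale)
qed

lemma gen_inverse_on_spanI:
  assumes f: "Vector_Spaces.linear scale scale f" and g: "endo_on scale (span B) g"
    and f_span: "f ` span B \<subseteq> span B"
    and basis: "\<And>b. b \<in> B \<Longrightarrow> f (g (f b)) = f b"
  shows "gen_inverse_on (span B) f g"
  unfolding gen_inverse_on_def
proof
  interpret f: Vector_Spaces.linear scale scale f by (rule f)
  fix u assume "u \<in> span B"
  then have "u \<in> span B \<and> f (g (f u)) = f u"
  proof (induction rule: span_induct_alt)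
    case base
    show ?case using endo_on_zero[OF g span_zero] by (simp add: span_zero)
  next
    case (step c b y)
    have "f b \<in> span B" "f y \<in> span B"
      using f_span step span_base by blast+
    then have "g (f (c *s b + y)) = c *s g (f b) + g (f y)"
      using g span_scale unfolding endo_on_def by (simp add: f.add f.scale)
    then show ?case
      using step basis span_add span_scale span_base by (simp add: f.add f.scale)
  qed
  then show "f (g (f u)) = f u" ..
qed

lemma in_span_killed_if_kernel:
  assumes f: "Vector_Spaces.linear scale scale f"
    and killed: "\<And>k. k \<in> K \<Longrightarrow> f k = 0"
    and inj: "inj_on f (B - K)" and indep: "independent (f ` (B - K))"
    and u: "u \<in> span B" and fu: "f u = 0"
  shows "u \<in> span K"
proof -
  interpret f: Vector_Spaces.linear scale scale f by (rule f)
  have "u \<in> span (K \<union> (B - K))"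
    using u span_mono[of B "K \<union> (B - K)"] by blast
  then obtain x y where u_eq: "u = x + y" and x: "x \<in> span K" and y: "y \<in> span (B - K)"
    unfolding span_Un by blast
  have "f x = 0" using f.eq_0_on_span[OF killed x] .
  with fu u_eq have "f y = f 0" by (simp add: f.add)
  moreover have "inj_on f (span (B - K))"
    using f.inj_on_span_iff_independent_image[OF indep] inj by blast
  ultimately have "y = 0" using y span_zero by (blast dest: inj_onD)
  with u_eq x show ?thesis by simp
qed

lemma endo_on_construct:
  assumes "independent B" and "f ` B \<subseteq> span B"
  shows "endo_on scale (span B) (vector_space_pair.construct scale scale B f)"
proof (rule endo_on_span_if_linear)
  interpret vector_space_pair scale scale by unfold_locales
  show "Vector_Spaces.linear scale scale (vector_space_pair.construct scale scale B f)"
    using linear_construct[OF assms(1)] .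
  show "vector_space_pair.construct scale scale B f ` span B \<subseteq> span B"
    using construct_in_span[OF assms(1)] span_mono[OF assms(2)] span_span by blast
qed

end

locale jordan_chains = vector_space scale for scale :: "'a::field \<Rightarrow> 'v::ab_group_add \<Rightarrow> 'v" +
  fixes \<phi> :: "'v \<Rightarrow> 'v" and r :: nat and S :: "nat \<Rightarrow> 'i set" and v :: "'i \<Rightarrow> 'v"
  assumes linear: "Vector_Spaces.linear scale scale \<phi>"
    and disj: "\<forall>h\<in>{1..r}. \<forall>h'\<in>{1..r}. h \<noteq> h' \<longrightarrow> S h \<inter> S h' = {}"
    and vker: "\<forall>h\<in>{1..r}. \<forall>s\<in>S h. (\<phi> ^^ h) (v s) = 0"
    and inj: "inj_on (\<lambda>(s, j). (\<phi> ^^ j) (v s)) {(s, j). \<exists>h\<in>{1..r}. s \<in> S h \<and> j < h}"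
    and indep: "independent {(\<phi> ^^ j) (v s) | s j. \<exists>h\<in>{1..r}. s \<in> S h \<and> j < h}"
    and spans: "span {(\<phi> ^^ j) (v s) | s j. \<exists>h\<in>{1..r}. s \<in> S h \<and> j < h} = U_part \<phi>"
begin

interpretation \<phi>: Vector_Spaces.linear scale scale \<phi> by (rule linear)

definition chain_basis :: "'v set" where
  "chain_basis = {(\<phi> ^^ j) (v s) | s j. \<exists>h\<in>{1..r}. s \<in> S h \<and> j < h}"

abbreviation chain_labels :: "'i set" where
  "chain_labels \<equiv> \<Union>h\<in>{1..r}. S h"

definition level :: "'i \<Rightarrow> nat" where
  "level t = (THE h. h \<in> {1..r} \<and> t \<in> S h)"

definition chain_top :: "'i \<Rightarrow> 'v" where
  "chain_top t = (\<phi> ^^ (level t - 1)) (v t)"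

text \<open>Written exactly as the sums in the theorem, so that it can be folded there.\<close>
definition top_comb :: "('i \<Rightarrow> 'a) \<Rightarrow> 'v" where
  "top_comb c = (\<Sum>t'\<in>{1..r}. \<Sum>t\<in>{t \<in> S t'. c t \<noteq> 0}. scale (c t) ((\<phi> ^^ (t' - 1)) (v t)))"

lemma U_part_eq_span: "U_part \<phi> = span chain_basis"
  using spans unfolding chain_basis_def ..

lemma chain_vector_in_basis:
  "h \<in> {1..r} \<Longrightarrow> s \<in> S h \<Longrightarrow> j < h \<Longrightarrow> (\<phi> ^^ j) (v s) \<in> chain_basis"
  unfolding chain_basis_def by blast

lemma chain_vector_in_U_part:
  "h \<in> {1..r} \<Longrightarrow> s \<in> S h \<Longrightarrow> j < h \<Longrightarrow> (\<phi> ^^ j) (v s) \<in> U_part \<phi>"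
  using chain_vector_in_basis span_base U_part_eq_span by blast

lemma chain_vector_inj:
  assumes "h1 \<in> {1..r}" "s1 \<in> S h1" "j1 < h1" "h2 \<in> {1..r}" "s2 \<in> S h2" "j2 < h2"
    and "(\<phi> ^^ j1) (v s1) = (\<phi> ^^ j2) (v s2)"
  shows "s1 = s2 \<and> j1 = j2"
proof -
  have "(s1, j1) \<in> {(s, j). \<exists>h\<in>{1..r}. s \<in> S h \<and> j < h}"
    and "(s2, j2) \<in> {(s, j). \<exists>h\<in>{1..r}. s \<in> S h \<and> j < h}"
    using assms by blast+
  from inj_onD[OF inj _ this] assms(7) show ?thesis by simp
qed

lemma level_eq:
  assumes "h \<in> {1..r}" and "t \<in> S h"
  shows "level t = h"
  unfolding level_def
proof (rule the_equality)
  show "h \<in> {1..r} \<and> t \<in> S h" using assms by simp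
  show "h' = h" if "h' \<in> {1..r} \<and> t \<in> S h'" for h'
    using that assms disj by blast
qed

lemma chain_top_eq: "h \<in> {1..r} \<Longrightarrow> t \<in> S h \<Longrightarrow> chain_top t = (\<phi> ^^ (h - 1)) (v t)"
  unfolding chain_top_def using level_eq by simp

lemma chain_top_vector_killed:
  assumes "h \<in> {1..r}" and "s \<in> S h"
  shows "\<phi> ((\<phi> ^^ (h - 1)) (v s)) = 0"
proof -
  have "h = Suc (h - 1)" using assms(1) by simp
  then have "\<phi> ((\<phi> ^^ (h - 1)) (v s)) = (\<phi> ^^ h) (v s)" by (metis comp_apply funpow.simps(2))
  then show ?thesis using vker assms by simp
qed

lemma tops_killed: "k \<in> chain_top ` chain_labels \<Longrightarrow> \<phi> k = 0"
  using chain_top_eq chain_top_vector_killed by auto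

lemma kernel_in_span_tops:
  assumes "u \<in> U_part \<phi>" and "\<phi> u = 0"
  shows "u \<in> span (chain_top ` chain_labels)"
proof (rule in_span_killed_if_kernel[OF linear tops_killed])
  let ?N = "chain_basis - chain_top ` chain_labels"
  have non_top: "\<exists>h s j. h \<in> {1..r} \<and> s \<in> S h \<and> Suc j < h \<and> b = (\<phi> ^^ j) (v s)"
    if b: "b \<in> ?N" for b
  proof -
    obtain h s j where hsj: "h \<in> {1..r}" "s \<in> S h" "j < h" "b = (\<phi> ^^ j) (v s)"
      using b unfolding chain_basis_def by blast
    have "j \<noteq> h - 1"
    proof
      assume "j = h - 1"
      then have "b = chain_top s" using hsj chain_top_eq[of h s] by simp
      then show False using b hsj(1,2) by blast
    qed
    then have "Suc j < h" using hsj(3) by simp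
    then show ?thesis using hsj by blast
  qed
  have "\<phi> ` ?N \<subseteq> chain_basis"
  proof
    fix b' assume "b' \<in> \<phi> ` ?N"
    then obtain b where b: "b \<in> ?N" and b': "b' = \<phi> b" by blast
    obtain h s j where "h \<in> {1..r}" "s \<in> S h" "Suc j < h" "b = (\<phi> ^^ j) (v s)"
      using non_top[OF b] by blast
    then show "b' \<in> chain_basis"
      using chain_vector_in_basis[of h s "Suc j"] b' by simp
  qed
  then show "independent (\<phi> ` ?N)"
    using independent_mono[OF indep[folded chain_basis_def]] by blast
  show "inj_on \<phi> ?N"
  proof
    fix b1 b2 assume b1: "b1 \<in> ?N" and b2: "b2 \<in> ?N" and eq: "\<phi> b1 = \<phi> b2"
    obtain h1 s1 j1 where hsj1: "h1 \<in> {1..r}" "s1 \<in> S h1" "Suc j1 < h1" "b1 = (\<phi> ^^ j1) (v s1)"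
      using non_top[OF b1] by blast
    obtain h2 s2 j2 where hsj2: "h2 \<in> {1..r}" "s2 \<in> S h2" "Suc j2 < h2" "b2 = (\<phi> ^^ j2) (v s2)"
      using non_top[OF b2] by blast
    have "(\<phi> ^^ Suc j1) (v s1) = (\<phi> ^^ Suc j2) (v s2)"
      using eq hsj1(4) hsj2(4) by simp
    then have "s1 = s2 \<and> j1 = j2"
      using chain_vector_inj[of h1 s1 "Suc j1" h2 s2 "Suc j2"] hsj1 hsj2 by simp
    then show "b1 = b2" using hsj1(4) hsj2(4) by simp
  qed
  show "u \<in> span chain_basis" using assms(1) U_part_eq_span by simp
qed (simp_all add: assms(2))

lemma top_comb_eq_sum:
  assumes fin: "finite {t \<in> chain_labels. c t \<noteq> 0}"
  shows "top_comb c = (\<Sum>t \<in> {t \<in> chain_labels. c t \<noteq> 0}. scale (c t) (chain_top t))"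
proof -
  let ?A = "\<lambda>h. {t \<in> S h. c t \<noteq> 0}"
  have supp: "{t \<in> chain_labels. c t \<noteq> 0} = (\<Union>h\<in>{1..r}. ?A h)" by blast
  have fin_A: "\<forall>h\<in>{1..r}. finite (?A h)"
    by (intro ballI finite_subset[OF _ fin]) auto
  have disj_A: "\<forall>h\<in>{1..r}. \<forall>h'\<in>{1..r}. h \<noteq> h' \<longrightarrow> ?A h \<inter> ?A h' = {}"
    using disj by auto
  have "(\<Sum>t \<in> {t \<in> chain_labels. c t \<noteq> 0}. scale (c t) (chain_top t))
      = (\<Sum>h\<in>{1..r}. \<Sum>t\<in>?A h. scale (c t) (chain_top t))"
    unfolding supp by (rule sum.UNION_disjoint[OF finite_atLeastAtMost fin_A disj_A])
  also have "\<dots> = top_comb c"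
    unfolding top_comb_def by (intro sum.cong refl) (simp add: chain_top_eq)
  finally show ?thesis ..
qed

lemma top_comb_of_span_tops:
  assumes "u \<in> span (chain_top ` chain_labels)"
  obtains c where "finite {t \<in> chain_labels. c t \<noteq> 0}" and "u = top_comb c"
proof -
  obtain B a where "finite B" and B: "B \<subseteq> chain_top ` chain_labels"
    and u: "u = (\<Sum>b\<in>B. scale (a b) b)"
    using assms unfolding span_explicit by blast
  from B obtain T where T: "T \<subseteq> chain_labels" "inj_on chain_top T" "B = chain_top ` T"
    unfolding subset_image_inj by blast
  have "finite T" using finite_imageD[of chain_top T] \<open>finite B\<close> T by simp
  define c where "c t = (if t \<in> T then a (chain_top t) else 0)" for t
  have supp: "{t \<in> chain_labels. c t \<noteq> 0} \<subseteq> T" unfolding c_def by auto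
  have "u = (\<Sum>t\<in>T. scale (c t) (chain_top t))"
    unfolding u T(3) sum.reindex[OF T(2)] c_def by simp
  also have "\<dots> = (\<Sum>t \<in> {t \<in> chain_labels. c t \<noteq> 0}. scale (c t) (chain_top t))"
    using supp T(1) \<open>finite T\<close> by (intro sum.mono_neutral_right) auto
  also have "\<dots> = top_comb c"
    using top_comb_eq_sum finite_subset[OF supp \<open>finite T\<close>] by simp
  finally show ?thesis using that finite_subset[OF supp \<open>finite T\<close>] by blast
qed

lemma top_comb_killed: "\<phi> (top_comb c) = 0"
  unfolding top_comb_def \<phi>.sum \<phi>.scale
proof (intro sum.neutral ballI)
  fix h t assume "h \<in> {1..r}" and "t \<in> {t \<in> S h. c t \<noteq> 0}"
  then show "scale (c t) (\<phi> ((\<phi> ^^ (h - 1)) (v t))) = 0"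
    using chain_top_vector_killed[of h t] by simp
qed

lemma top_comb_in_U_part: "top_comb c \<in> U_part \<phi>"
  unfolding top_comb_def U_part_eq_span
proof (intro span_sum span_scale span_base)
  fix h t assume "h \<in> {1..r}" and "t \<in> {t \<in> S h. c t \<noteq> 0}"
  then show "(\<phi> ^^ (h - 1)) (v t) \<in> chain_basis"
    by (intro chain_vector_in_basis[of h]) auto
qed

definition chain_values :: "('v \<Rightarrow> 'v) \<Rightarrow> ('i \<Rightarrow> 'v) \<Rightarrow> (nat \<Rightarrow> 'i \<Rightarrow> 'i \<Rightarrow> 'a) \<Rightarrow> bool" where
  "chain_values g v' lam \<longleftrightarrow> (\<forall>h\<in>{1..r}. \<forall>s\<in>S h. g (v s) = v' s \<and>
     (\<forall>i\<in>{1..h-1}. g ((\<phi> ^^ i) (v s)) = (\<phi> ^^ (i - 1)) (v s) + top_comb (lam i s)))"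

definition finite_coeffs :: "(nat \<Rightarrow> 'i \<Rightarrow> 'i \<Rightarrow> 'a) \<Rightarrow> bool" where
  "finite_coeffs lam \<longleftrightarrow>
     (\<forall>h\<in>{1..r}. \<forall>s\<in>S h. \<forall>i\<in>{1..h-1}. finite {t \<in> chain_labels. lam i s t \<noteq> 0})"

lemma gen_inverse_if_chain_values:
  assumes g: "endo_on scale (U_part \<phi>) g" and vals: "chain_values g v' lam"
  shows "gen_inverse_on (U_part \<phi>) \<phi> g"
  unfolding U_part_eq_span
proof (rule gen_inverse_on_spanI[OF linear])
  show "endo_on scale (span chain_basis) g" using g U_part_eq_span by simp
  show "\<phi> ` span chain_basis \<subseteq> span chain_basis"
    using U_part_invariant[of \<phi>, OF \<phi>.zero] U_part_eq_span by blast
  fix b assume "b \<in> chain_basis"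
  then obtain h s j where hsj: "h \<in> {1..r}" "s \<in> S h" "j < h" and b: "b = (\<phi> ^^ j) (v s)"
    unfolding chain_basis_def by blast
  show "\<phi> (g (\<phi> b)) = \<phi> b"
  proof (cases "Suc j = h")
    case True
    then have "j = h - 1" by simp
    then have "\<phi> b = 0" using chain_top_vector_killed[OF hsj(1,2)] b by simp
    then show ?thesis using endo_on_zero[OF g] U_part_eq_span span_zero by simp
  next
    case False
    then have "Suc j \<in> {1..h-1}" using hsj(3) by simp
    moreover have "\<forall>i\<in>{1..h-1}. g ((\<phi> ^^ i) (v s)) = (\<phi> ^^ (i - 1)) (v s) + top_comb (lam i s)"
      using vals hsj(1,2) unfolding chain_values_def by blast
    ultimately have "g ((\<phi> ^^ Suc j) (v s)) = (\<phi> ^^ (Suc j - 1)) (v s) + top_comb (lam (Suc j) s)"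
      by blast
    then have "g (\<phi> b) = (\<phi> ^^ j) (v s) + top_comb (lam (Suc j) s)"
      using b by simp
    then show ?thesis using b by (simp add: \<phi>.add top_comb_killed)
  qed
qed

lemma gen_inverse_chain_value:
  assumes g: "endo_on scale (U_part \<phi>) g" and gi: "gen_inverse_on (U_part \<phi>) \<phi> g"
    and hsi: "h \<in> {1..r}" "s \<in> S h" "i \<in> {1..h-1}"
  shows "\<exists>c. finite {t \<in> chain_labels. c t \<noteq> 0} \<and>
    g ((\<phi> ^^ i) (v s)) = (\<phi> ^^ (i - 1)) (v s) + top_comb c"
proof -
  let ?x = "(\<phi> ^^ (i - 1)) (v s)"
  have x: "?x \<in> U_part \<phi>" using chain_vector_in_U_part[of h s "i - 1"] hsi by auto
  have "i = Suc (i - 1)" using hsi(3) by simp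
  then have \<phi>x: "\<phi> ?x = (\<phi> ^^ i) (v s)" by (metis comp_apply funpow.simps(2))
  define u where "u = g (\<phi> ?x) - ?x"
  have "g (\<phi> ?x) \<in> U_part \<phi>"
    using g U_part_invariant[of \<phi>, OF \<phi>.zero x] unfolding endo_on_def by blast
  then have "u \<in> U_part \<phi>" using x span_diff U_part_eq_span unfolding u_def by simp
  moreover have "\<phi> u = 0"
    using gi x unfolding u_def gen_inverse_on_def by (simp add: \<phi>.diff)
  ultimately have "u \<in> span (chain_top ` chain_labels)" by (rule kernel_in_span_tops)
  then obtain c where c: "finite {t \<in> chain_labels. c t \<noteq> 0}" "u = top_comb c"
    by (rule top_comb_of_span_tops)
  have "g ((\<phi> ^^ i) (v s)) = ?x + u" unfolding u_def \<phi>x[symmetric] by simp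
  with c show ?thesis by blast
qed

lemma exists_endo_on_chain_basis:
  assumes val: "\<And>h s j. h \<in> {1..r} \<Longrightarrow> s \<in> S h \<Longrightarrow> j < h \<Longrightarrow> val s j \<in> U_part \<phi>"
  obtains g where "endo_on scale (U_part \<phi>) g"
    and "\<And>h s j. h \<in> {1..r} \<Longrightarrow> s \<in> S h \<Longrightarrow> j < h \<Longrightarrow> g ((\<phi> ^^ j) (v s)) = val s j"
proof -
  interpret vector_space_pair scale scale by unfold_locales
  define P where "P = {(s, j). \<exists>h\<in>{1..r}. s \<in> S h \<and> j < h}"
  define E where "E = (\<lambda>(s, j). (\<phi> ^^ j) (v s))"
  have basis: "chain_basis = E ` P" unfolding chain_basis_def E_def P_def by auto
  have injE: "inj_on E P" using inj unfolding E_def P_def .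
  have indep': "independent chain_basis" using indep unfolding chain_basis_def .
  define f where "f b = case_prod val (inv_into P E b)" for b
  have f: "f (E (s, j)) = val s j" if "(s, j) \<in> P" for s j
    unfolding f_def using inv_into_f_f[OF injE that] by simp
  have "f ` chain_basis \<subseteq> span chain_basis"
  proof
    fix y assume "y \<in> f ` chain_basis"
    then obtain s j h where hsj: "h \<in> {1..r}" "s \<in> S h" "j < h" and y: "y = f (E (s, j))"
      unfolding basis P_def by blast
    then have "(s, j) \<in> P" unfolding P_def by blast
    then show "y \<in> span chain_basis" using f val[OF hsj] y U_part_eq_span by simp
  qed
  then have "endo_on scale (U_part \<phi>) (construct chain_basis f)"
    using endo_on_construct[OF indep'] U_part_eq_span by simp
  moreover have "construct chain_basis f ((\<phi> ^^ j) (v s)) = val s j"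
    if "h \<in> {1..r}" "s \<in> S h" "j < h" for h s j
  proof -
    have "(s, j) \<in> P" unfolding P_def using that by blast
    then have "f ((\<phi> ^^ j) (v s)) = val s j" using f unfolding E_def by simp
    then show ?thesis
      using construct_basis[OF indep' chain_vector_in_basis[OF that]] by simp
  qed
  ultimately show ?thesis using that by blast
qed

lemma gen_inverse_iff_chain_values:
  assumes g: "endo_on scale (U_part \<phi>) g"
  shows "gen_inverse_on (U_part \<phi>) \<phi> g \<longleftrightarrow>
    (\<exists>v' lam. (\<forall>h\<in>{1..r}. \<forall>s\<in>S h. v' s \<in> U_part \<phi>) \<and> finite_coeffs lam \<and>
      chain_values g v' lam)"
proof
  assume gi: "gen_inverse_on (U_part \<phi>) \<phi> g"
  define lam where "lam i s = (SOME c. finite {t \<in> chain_labels. c t \<noteq> 0} \<and>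
      g ((\<phi> ^^ i) (v s)) = (\<phi> ^^ (i - 1)) (v s) + top_comb c)" for i s
  have lam: "finite {t \<in> chain_labels. lam i s t \<noteq> 0} \<and>
      g ((\<phi> ^^ i) (v s)) = (\<phi> ^^ (i - 1)) (v s) + top_comb (lam i s)"
    if "h \<in> {1..r}" "s \<in> S h" "i \<in> {1..h-1}" for h s i
    unfolding lam_def by (rule someI_ex[OF gen_inverse_chain_value[OF g gi that]])
  have "\<forall>h\<in>{1..r}. \<forall>s\<in>S h. g (v s) \<in> U_part \<phi>"
  proof (intro ballI)
    fix h s assume "h \<in> {1..r}" "s \<in> S h"
    then show "g (v s) \<in> U_part \<phi>"
      using g chain_vector_in_U_part[of h s 0] unfolding endo_on_def by auto
  qed
  moreover have "finite_coeffs lam" using lam unfolding finite_coeffs_def by blast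
  moreover have "chain_values g (\<lambda>s. g (v s)) lam" using lam unfolding chain_values_def by blast
  ultimately show "\<exists>v' lam. (\<forall>h\<in>{1..r}. \<forall>s\<in>S h. v' s \<in> U_part \<phi>) \<and> finite_coeffs lam \<and>
      chain_values g v' lam"
    by (intro exI[of _ "\<lambda>s. g (v s)"] exI[of _ lam]) blast
next
  assume "\<exists>v' lam. (\<forall>h\<in>{1..r}. \<forall>s\<in>S h. v' s \<in> U_part \<phi>) \<and> finite_coeffs lam \<and>
      chain_values g v' lam"
  then obtain v' lam where "chain_values g v' lam" by blast
  then show "gen_inverse_on (U_part \<phi>) \<phi> g" by (rule gen_inverse_if_chain_values[OF g])
qed

lemma exists_gen_inverse_with_chain_values:
  assumes v': "\<forall>h\<in>{1..r}. \<forall>s\<in>S h. v' s \<in> U_part \<phi>"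
  shows "\<exists>g. endo_on scale (U_part \<phi>) g \<and> gen_inverse_on (U_part \<phi>) \<phi> g \<and> chain_values g v' lam"
proof -
  define val where "val s j = (if j = 0 then v' s else (\<phi> ^^ (j - 1)) (v s) + top_comb (lam j s))"
    for s j
  have "val s j \<in> U_part \<phi>" if "h \<in> {1..r}" "s \<in> S h" "j < h" for h s j
  proof (cases "j = 0")
    case False
    have "(\<phi> ^^ (j - 1)) (v s) \<in> U_part \<phi>"
      using chain_vector_in_U_part[of h s "j - 1"] that by simp
    then show ?thesis
      using top_comb_in_U_part span_add U_part_eq_span False unfolding val_def by simp
  qed (use v' that in \<open>auto simp: val_def\<close>)
  then obtain g where g: "endo_on scale (U_part \<phi>) g"
    and g_vals: "\<And>h s j. h \<in> {1..r} \<Longrightarrow> s \<in> S h \<Longrightarrow> j < h \<Longrightarrow> g ((\<phi> ^^ j) (v s)) = val s j"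
    by (rule exists_endo_on_chain_basis[OF _ that])
  have "chain_values g v' lam"
    unfolding chain_values_def
  proof (intro ballI conjI)
    fix h s assume hs: "h \<in> {1..r}" "s \<in> S h"
    show "g (v s) = v' s" using g_vals[OF hs, of 0] hs unfolding val_def by simp
    fix i assume "i \<in> {1..h-1}"
    then show "g ((\<phi> ^^ i) (v s)) = (\<phi> ^^ (i - 1)) (v s) + top_comb (lam i s)"
      using g_vals[OF hs, of i] unfolding val_def by auto
  qed
  with g show ?thesis using gen_inverse_if_chain_values[OF g] by blast
qed

end

theorem lemma3p10:
  fixes scale :: "'a::field \<Rightarrow> 'v::ab_group_add \<Rightarrow> 'v"
    and \<phi> :: "'v \<Rightarrow> 'v"
    and r :: nat
    and S :: "nat \<Rightarrow> 'i set"
    and v :: "'i \<Rightarrow> 'v"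
  assumes vs: "vector_space scale"
    and fp: "finite_potent scale \<phi>"
    and idx: "fp_index \<phi> = r"
    and disj: "\<forall>h\<in>{1..r}. \<forall>h'\<in>{1..r}. h \<noteq> h' \<longrightarrow> S h \<inter> S h' = {}"
    and vU: "\<forall>h\<in>{1..r}. \<forall>s\<in>S h. v s \<in> U_part \<phi>"
    and vker: "\<forall>h\<in>{1..r}. \<forall>s\<in>S h. (\<phi> ^^ h) (v s) = 0"
    and inj: "inj_on (\<lambda>(s, j). (\<phi> ^^ j) (v s)) {(s, j). \<exists>h\<in>{1..r}. s \<in> S h \<and> j < h}"
    and indep: "Modules.module.independent scale {(\<phi> ^^ j) (v s) | s j. \<exists>h\<in>{1..r}. s \<in> S h \<and> j < h}"
    and spans: "Modules.module.span scale {(\<phi> ^^ j) (v s) | s j. \<exists>h\<in>{1..r}. s \<in> S h \<and> j < h} = U_part \<phi>"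
  shows
    "(\<forall>g. endo_on scale (U_part \<phi>) g \<longrightarrow>
       (gen_inverse_on (U_part \<phi>) \<phi> g \<longleftrightarrow>
        (\<exists>(v' :: 'i \<Rightarrow> 'v) (lam :: nat \<Rightarrow> 'i \<Rightarrow> 'i \<Rightarrow> 'a).
           (\<forall>h\<in>{1..r}. \<forall>s\<in>S h. v' s \<in> U_part \<phi>) \<and>
           (\<forall>h\<in>{1..r}. \<forall>s\<in>S h. \<forall>i\<in>{1..h-1}.
              finite {t \<in> (\<Union>h'\<in>{1..r}. S h'). lam i s t \<noteq> 0}) \<and>
           (\<forall>h\<in>{1..r}. \<forall>s\<in>S h.
              g (v s) = v' s \<and>
              (\<forall>i\<in>{1..h-1}. g ((\<phi> ^^ i) (v s)) =
                 (\<phi> ^^ (i - 1)) (v s) +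
                 (\<Sum>t'\<in>{1..r}. \<Sum>t\<in>{t \<in> S t'. lam i s t \<noteq> 0}.
                    scale (lam i s t) ((\<phi> ^^ (t' - 1)) (v t))))))))
     \<and>
     (\<forall>(v' :: 'i \<Rightarrow> 'v) (lam :: nat \<Rightarrow> 'i \<Rightarrow> 'i \<Rightarrow> 'a).
        (\<forall>h\<in>{1..r}. \<forall>s\<in>S h. v' s \<in> U_part \<phi>) \<and>
        (\<forall>h\<in>{1..r}. \<forall>s\<in>S h. \<forall>i\<in>{1..h-1}.
           finite {t \<in> (\<Union>h'\<in>{1..r}. S h'). lam i s t \<noteq> 0}) \<longrightarrow>
        (\<exists>g. endo_on scale (U_part \<phi>) g \<and> gen_inverse_on (U_part \<phi>) \<phi> g \<and>
           (\<forall>h\<in>{1..r}. \<forall>s\<in>S h.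
              g (v s) = v' s \<and>
              (\<forall>i\<in>{1..h-1}. g ((\<phi> ^^ i) (v s)) =
                 (\<phi> ^^ (i - 1)) (v s) +
                 (\<Sum>t'\<in>{1..r}. \<Sum>t\<in>{t \<in> S t'. lam i s t \<noteq> 0}.
                    scale (lam i s t) ((\<phi> ^^ (t' - 1)) (v t)))))))"
proof -
  \<comment> \<open>Only the linearity of \<phi> is taken from fp.\<close>
  interpret jordan_chains scale \<phi> r S v
    using vs fp disj vker inj indep spans unfolding finite_potent_def
    by (intro jordan_chains.intro jordan_chains_axioms.intro) auto
  show ?thesis
    unfolding top_comb_def[symmetric] chain_values_def[symmetric] finite_coeffs_def[symmetric]
    using gen_inverse_iff_chain_values exists_gen_inverse_with_chain_values by blast
qed

end
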